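(* There is an absolute constant $C_1>0$ such that the following holds. Let $f:\mathbb{N}\to\mathbb{N}$ be an increasing function. For each $n\in\mathbb{N}$, place $f(n)$ points independently and uniformly at random in the interior of a disc $\mathcal{D}$ in $\mathbb{R}^2$ of radius $n$, and let $G=G_n$ be the geometric graph whose vertices are these points, with an edge between two points whenever their Euclidean distance is at most one. Set $\lambda_n:=\frac{f(n)}{\pi n^2}$. If $\lambda_n>C_1\log n$, then asymptotically almost surely (i.e. with probability tending to $1$ as $n\to\infty$): (i) the degree of every vertex of $G$ lies between $\frac{\pi}{3}\lambda_n$ and $2\pi\lambda_n$; (ii) the graph diameter of $G$ is at most $6n$. *)

theory Defs
  imports "HOL-Probability.Probability"
begin

definition point_process :: "nat \<Rightarrow> real \<Rightarrow> (nat \<Rightarrow> real^2) measure" where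
  "point_process m r = PiM {..<m} (\<lambda>_. uniform_measure lborel (ball (0::real^2) r))"

definition geo_degree :: "(nat \<Rightarrow> real^2) \<Rightarrow> nat \<Rightarrow> nat \<Rightarrow> nat" where
  "geo_degree x m i = card {j. j < m \<and> j \<noteq> i \<and> dist (x i) (x j) \<le> 1}"

definition geo_walk_le :: "(nat \<Rightarrow> real^2) \<Rightarrow> nat \<Rightarrow> nat \<Rightarrow> nat \<Rightarrow> nat \<Rightarrow> bool" where
  "geo_walk_le x m k i j \<longleftrightarrow>
     (\<exists>p l. l \<le> k \<and> p 0 = i \<and> p l = j \<and> (\<forall>t\<le>l. p t < m) \<and>
            (\<forall>t<l. dist (x (p t)) (x (p (Suc t))) \<le> 1))"

definition geo_diam_le :: "(nat \<Rightarrow> real^2) \<Rightarrow> nat \<Rightarrow> nat \<Rightarrow> bool" where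
  "geo_diam_le x m k \<longleftrightarrow> (\<forall>i<m. \<forall>j<m. geo_walk_le x m k i j)"

end

theory Submission
  imports Defs
begin

text \<open>Cover the disc by a grid of mesh \<open>1/1000\<close>. Near a grid point \<open>y\<close> well inside the disc, the
  number of sample points in a region is a sum of \<open>f n\<close> independent indicators, with mean at least
  \<open>\<lambda> \<pi> r\<^sup>2 / 2\<close> for the half disc of radius \<open>r\<close> at \<open>y\<close> facing the centre and at most
  \<open>\<lambda> \<pi> r\<^sup>2\<close> for the full disc. Chernoff bounds with \<open>s = 1/2\<close> show that, outside an event of
  probability \<open>O(n\<^sup>2 exp (-\<lambda>/50)) = O(1/n)\<close> when \<open>\<lambda> > 200 ln n\<close>, every such grid
  point has more than \<open>\<pi>\<lambda>/3 + 1\<close> points within \<open>49/50\<close>, fewer than \<open>2\<pi>\<lambda>\<close> within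
  \<open>103/100\<close>, and at least one within \<open>1/5\<close>. Since every vertex is within \<open>1/50\<close> of such a
  grid point, the first two facts give the degree bounds. For the diameter, cut the segment between
  two vertices into \<open>4n\<close> pieces of length at most \<open>1/2\<close> and replace each division point by a
  vertex within \<open>11/50\<close> of it: consecutive vertices are adjacent.\<close>

section \<open>Chernoff bounds for the number of sample points in a set\<close>

definition points_in :: "nat \<Rightarrow> 'a set \<Rightarrow> (nat \<Rightarrow> 'a) \<Rightarrow> real" where
  "points_in m A x = (\<Sum>j<m. indicator A (x j))"

lemma points_in_eq_card: "points_in m A x = real (card {j. j < m \<and> x j \<in> A})"
proof -
  have "{j. j < m \<and> x j \<in> A} = {..<m} \<inter> {j. x j \<in> A}" by auto
  then show ?thesis by (simp add: points_in_def indicator_def sum.If_cases)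
qed

lemma points_in_nonneg: "0 \<le> points_in m A x"
  unfolding points_in_def by (intro sum_nonneg) auto

lemma points_in_le: "points_in m A x \<le> m"
proof -
  have "points_in m A x \<le> (\<Sum>j<m. 1)"
    unfolding points_in_def by (intro sum_mono) (auto simp: indicator_def)
  then show ?thesis by simp
qed

lemma points_in_mono: "A \<subseteq> B \<Longrightarrow> points_in m A x \<le> points_in m B x"
  unfolding points_in_def by (intro sum_mono) (auto simp: indicator_def)

lemma points_in_measurable[measurable]:
  assumes "A \<in> sets M"
  shows "points_in m A \<in> borel_measurable (PiM {..<m} (\<lambda>_. M))"
  unfolding points_in_def using assms by measurable

lemma integral_exp_points_in:
  assumes M: "prob_space M" and A: "A \<in> sets M"
  shows "(\<integral>x. exp (s * points_in m A x) \<partial>PiM {..<m} (\<lambda>_. M)) = (1 + measure M A * (exp s - 1)) ^ m"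
proof -
  interpret M: prob_space M by fact
  interpret product_prob_space "\<lambda>_. M" "{..<m}"
    using M by (simp add: product_prob_space_def product_prob_space_axioms_def
        product_sigma_finite_def prob_space_imp_sigma_finite)
  have exp_indicator: "(\<lambda>z. exp (s * indicator A z)) = (\<lambda>z. 1 + (exp s - 1) * indicator A z)"
    by (auto simp: indicator_def)
  have integrable: "integrable M (\<lambda>z. exp (s * indicator A z))"
    unfolding exp_indicator using A by (auto simp: M.emeasure_finite less_top[symmetric])
  have "(\<integral>z. exp (s * indicator A z) \<partial>M) = 1 + measure M A * (exp s - 1)"
    unfolding exp_indicator using A
    by (subst Bochner_Integration.integral_add)
       (auto simp: M.prob_space M.emeasure_finite less_top[symmetric])
  moreover have "exp (s * points_in m A x) = (\<Prod>j\<in>{..<m}. exp (s * indicator A (x j)))" for x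
    unfolding points_in_def sum_distrib_left by (rule exp_sum) simp
  ultimately show ?thesis
    using integrable by (simp only:) (subst product_integral_prod; simp)
qed

text \<open>Markov's inequality for \<open>exp (s * points_in m A)\<close>; then \<open>1 + t \<le> exp t\<close> bounds its
  expectation.\<close>

lemma prob_points_in_ge:
  assumes M: "prob_space M" and A: "A \<in> sets M" and s: "s > 0"
  shows "measure (PiM {..<m} (\<lambda>_. M)) {x \<in> space (PiM {..<m} (\<lambda>_. M)). b \<le> points_in m A x}
          \<le> exp (- s * b + m * measure M A * (exp s - 1))"
proof -
  let ?P = "PiM {..<m} (\<lambda>_. M)"
  interpret P: prob_space ?P by (rule prob_space_PiM) (use M in auto)
  have "integrable ?P (\<lambda>x. exp (s * points_in m A x))"
  proof (rule P.integrable_const_bound[where B = "exp (s * m)"])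
    show "AE x in ?P. norm (exp (s * points_in m A x)) \<le> exp (s * m)"
      using s points_in_le[of m A] by (intro AE_I2) (simp add: mult_left_mono)
  qed (use A in measurable)
  then have "measure ?P {x \<in> space ?P. exp (s * b) \<le> exp (s * points_in m A x)}
      \<le> (\<integral>x. exp (s * points_in m A x) \<partial>?P) / exp (s * b)"
    by (rule integral_Markov_inequality_measure) (use A in auto)
  also have "\<dots> = (1 + measure M A * (exp s - 1)) ^ m / exp (s * b)"
    by (simp add: integral_exp_points_in[OF M A])
  also have "\<dots> \<le> exp (measure M A * (exp s - 1)) ^ m / exp (s * b)"
    using s by (intro divide_right_mono power_mono) auto
  also have "\<dots> = exp (m * (measure M A * (exp s - 1)) - s * b)"
    by (simp only: exp_diff exp_of_nat_mult)
  also have "\<dots> = exp (- s * b + m * measure M A * (exp s - 1))"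
    by (simp add: algebra_simps)
  finally show ?thesis using s by simp
qed

lemma prob_points_in_le:
  assumes M: "prob_space M" and A: "A \<in> sets M" and s: "s > 0"
  shows "measure (PiM {..<m} (\<lambda>_. M)) {x \<in> space (PiM {..<m} (\<lambda>_. M)). points_in m A x \<le> a}
          \<le> exp (s * a - m * measure M A * (1 - exp (- s)))"
proof -
  let ?P = "PiM {..<m} (\<lambda>_. M)"
  interpret P: prob_space ?P by (rule prob_space_PiM) (use M in auto)
  interpret M: prob_space M by fact
  have "integrable ?P (\<lambda>x. exp (- s * points_in m A x))"
  proof (rule P.integrable_const_bound[where B = 1])
    show "AE x in ?P. norm (exp (- s * points_in m A x)) \<le> 1"
      using s points_in_nonneg[of m A] by (intro AE_I2) simp
  qed (use A in measurable)
  then have "measure ?P {x \<in> space ?P. exp (- s * a) \<le> exp (- s * points_in m A x)}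
      \<le> (\<integral>x. exp (- s * points_in m A x) \<partial>?P) / exp (- s * a)"
    by (rule integral_Markov_inequality_measure) (use A in auto)
  also have "\<dots> = (1 + measure M A * (exp (- s) - 1)) ^ m / exp (- s * a)"
    using integral_exp_points_in[OF M A, of m "- s"] by simp
  also have "\<dots> \<le> exp (measure M A * (exp (- s) - 1)) ^ m / exp (- s * a)"
  proof (intro divide_right_mono power_mono)
    have "measure M A * (1 - exp (- s)) \<le> 1 * 1"
      using s by (intro mult_mono) auto
    then show "0 \<le> 1 + measure M A * (exp (- s) - 1)" by (simp add: algebra_simps)
  qed auto
  also have "\<dots> = exp (m * (measure M A * (exp (- s) - 1)) - (- s * a))"
    by (simp only: exp_diff exp_of_nat_mult)
  also have "\<dots> = exp (s * a - m * measure M A * (1 - exp (- s)))"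
    by (simp add: algebra_simps)
  finally show ?thesis using s by simp
qed

section \<open>Half discs\<close>

text \<open>Used instead of \<open>ball y r\<close> so that the region stays inside the disc of radius \<open>R\<close> even
  when \<open>y\<close> is close to its boundary.\<close>

definition half_disc :: "real \<Rightarrow> 'a::real_inner \<Rightarrow> 'a set" where
  "half_disc r y = ball y r \<inter> {z. inner z y \<le> inner y y}"

lemma half_disc_borel[measurable]: "half_disc r y \<in> sets borel"
  unfolding half_disc_def by (intro sets.Int borel_open borel_closed closed_halfspace_component_le
      closed_Collect_le continuous_intros) auto

lemma half_disc_subset_ball: "half_disc r y \<subseteq> ball y r"
  unfolding half_disc_def by auto

lemma half_disc_subset_centred_ball:
  assumes "norm y ^ 2 + r ^ 2 \<le> R ^ 2" "R \<ge> 0"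
  shows "half_disc r y \<subseteq> ball 0 R"
proof
  fix z assume z: "z \<in> half_disc r y"
  then have "norm (z - y) < r" "inner (z - y) y \<le> 0"
    by (auto simp: half_disc_def dist_norm norm_minus_commute inner_diff_left)
  moreover have "norm z ^ 2 = norm y ^ 2 + 2 * inner (z - y) y + norm (z - y) ^ 2"
    by (simp add: power2_norm_eq_inner inner_diff_left inner_diff_right inner_commute algebra_simps)
  ultimately have "norm z ^ 2 < R ^ 2"
    using assms power_strict_mono[of "norm (z - y)" r 2] by auto
  then show "z \<in> ball 0 R" using assms(2) by (simp add: power2_less_imp_less)
qed

text \<open>The two halves \<open>S\<close> and \<open>T = -S\<close> of \<open>ball 0 r\<close> have equal area, and
  \<open>half_disc r y = y + S\<close>.\<close>

lemma measure_half_disc_ge: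
  fixes y :: "real^2"
  assumes r: "r \<ge> 0"
  shows "measure lborel (half_disc r y) \<ge> pi * r ^ 2 / 2"
proof -
  define S where "S = ball (0::real^2) r \<inter> {v. inner v y \<le> 0}"
  define T where "T = ball (0::real^2) r \<inter> {v. inner v y \<ge> 0}"
  have S[measurable]: "S \<in> sets lborel" and T[measurable]: "T \<in> sets lborel"
    unfolding S_def T_def by (simp_all add: borel_open borel_closed closed_halfspace_le closed_halfspace_ge)
  have "T = (\<lambda>v. (-1) *\<^sub>R v + 0) ` S"
    by (auto simp: S_def T_def image_iff intro!: bexI[where x = "- _"])
  then have "measure lebesgue T = \<bar>-1\<bar> ^ DIM(real^2) * measure lebesgue S"
    by (simp only: measure_lebesgue_affine)
  then have mirror: "measure lborel T = measure lborel S" using S T by simp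
  have "ball (0::real^2) r = S \<union> T" by (auto simp: S_def T_def)
  then have "r ^ 2 * pi \<le> measure lborel S + measure lborel T"
    using circle_area[OF r, of 0] measure_Un_le[OF S T] by simp
  moreover have "half_disc r y = (+) y ` S"
    by (auto simp: S_def half_disc_def dist_norm inner_diff_left image_iff inner_add_left
        intro!: bexI[where x = "_ - y"])
  then have "measure lebesgue (half_disc r y) = measure lebesgue S"
    by (simp add: measure_translation)
  then have "measure lborel (half_disc r y) = measure lborel S"
    using S by simp
  ultimately show ?thesis using mirror by (simp add: algebra_simps)
qed

section \<open>A grid covering the disc\<close>

definition round_down_grid :: "real^2 \<Rightarrow> real^2" where
  "round_down_grid w = (\<chi> i. of_int \<lfloor>1000 * w $ i\<rfloor> / 1000)"

definition grid :: "nat \<Rightarrow> (real^2) set" where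
  "grid n = (\<lambda>g. \<chi> i. of_int (g i) / 1000) ` (PiE UNIV (\<lambda>_::2. {-(1000 * int n + 1)..1000 * int n + 1}))"

text \<open>The point is pulled towards the origin by \<open>1/100\<close> before rounding, so that its grid point
  stays at distance more than \<open>1\<close> from the boundary circle.\<close>

definition grid_point :: "nat \<Rightarrow> real^2 \<Rightarrow> real^2" where
  "grid_point n q = round_down_grid (((real n - 1/100) / real n) *\<^sub>R q)"

lemma finite_grid: "finite (grid n)"
  unfolding grid_def by (intro finite_imageI finite_PiE) auto

lemma card_grid: "card (grid n) \<le> (2000 * n + 3) ^ 2"
proof -
  have "card (grid n) \<le> card (PiE (UNIV::2 set) (\<lambda>_. {-(1000 * int n + 1)..1000 * int n + 1}))"
    unfolding grid_def by (intro card_image_le finite_PiE) auto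
  also have "\<dots> = (2000 * n + 3) ^ 2"
    by (simp add: card_PiE)
  finally show ?thesis .
qed

lemma dist_round_down_grid: "dist w (round_down_grid w) \<le> 1/500"
proof -
  have "\<bar>(w - round_down_grid w) $ i\<bar> \<le> 1/1000" for i
  proof -
    have r: "round_down_grid w $ i = of_int \<lfloor>1000 * w $ i\<rfloor> / 1000"
      by (simp add: round_down_grid_def)
    have "of_int \<lfloor>1000 * w $ i\<rfloor> \<le> 1000 * w $ i" "1000 * w $ i < of_int \<lfloor>1000 * w $ i\<rfloor> + 1"
      by linarith+
    then show ?thesis by (simp only: vector_minus_component r abs_le_iff) linarith
  qed
  then have "(\<Sum>i\<in>UNIV. \<bar>(w - round_down_grid w) $ i\<bar>) \<le> (\<Sum>i\<in>(UNIV::2 set). 1/1000)"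
    by (intro sum_mono)
  then show ?thesis
    using norm_le_l1_cart[of "w - round_down_grid w"] by (simp add: dist_norm)
qed

lemma round_down_grid_in_grid:
  assumes "norm w \<le> real n"
  shows "round_down_grid w \<in> grid n"
proof -
  have "\<lfloor>1000 * w $ i\<rfloor> \<in> {-(1000 * int n + 1)..1000 * int n + 1}" for i
    using component_le_norm_cart[of w i] assms by simp linarith
  then have "(\<lambda>i. \<lfloor>1000 * w $ i\<rfloor>) \<in> PiE UNIV (\<lambda>_::2. {-(1000 * int n + 1)..1000 * int n + 1})"
    by auto
  then show ?thesis
    unfolding grid_def round_down_grid_def by (rule rev_image_eqI) simp
qed

lemma grid_point_properties:
  assumes n: "n \<ge> 100" and q: "norm q \<le> real n"
  shows "dist q (grid_point n q) \<le> 1/50"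
    and "norm (grid_point n q) ^ 2 + 1 < real n ^ 2"
    and "grid_point n q \<in> grid n"
proof -
  define w where "w = ((real n - 1/100) / real n) *\<^sub>R q"
  have w_grid: "grid_point n q = round_down_grid w" by (simp add: grid_point_def w_def)
  have c: "(real n - 1/100) / real n = 1 - 1 / (100 * real n)"
    using n by (simp add: field_simps)
  have qw: "dist q w \<le> 1/100"
  proof -
    have "dist q w = norm q / (100 * real n)"
      by (simp add: w_def c dist_norm scaleR_diff_left)
    then show ?thesis using n q by (simp add: divide_le_eq)
  qed
  have nw: "norm w \<le> real n - 1/100"
  proof -
    have "norm w = (1 - 1 / (100 * real n)) * norm q"
      using n by (simp add: w_def c)
    also have "\<dots> \<le> (1 - 1 / (100 * real n)) * real n"
      using n q by (intro mult_left_mono) auto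
    finally show ?thesis using n by (simp add: algebra_simps)
  qed
  have wg: "norm (round_down_grid w - w) \<le> 1/500"
    using dist_round_down_grid[of w] by (simp add: dist_norm norm_minus_commute)
  show "dist q (grid_point n q) \<le> 1/50"
    unfolding w_grid using qw dist_round_down_grid[of w] dist_triangle[of q "round_down_grid w" w]
    by linarith
  have "norm (grid_point n q) \<le> real n - 8/1000"
    unfolding w_grid using nw wg norm_triangle_sub[of "round_down_grid w" w] by linarith
  then have "norm (grid_point n q) ^ 2 \<le> (real n - 8/1000) ^ 2"
    by (intro power_mono) auto
  then show "norm (grid_point n q) ^ 2 + 1 < real n ^ 2"
    using n by (simp add: power2_eq_square algebra_simps)
  show "grid_point n q \<in> grid n"
    unfolding w_grid using nw by (intro round_down_grid_in_grid) simp
qed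

section \<open>Well-spread configurations\<close>

text \<open>Every vertex is within \<open>1/50\<close> of a grid point, whence the radii \<open>49/50 = 1 - 1/50\<close> and
  \<open>103/100 > 1 + 1/50\<close>; the radius \<open>1/5\<close> leaves room for \<open>1/5 + 1/50 \<le> 1/4\<close> in the walk.\<close>

definition dense_around :: "real \<Rightarrow> nat \<Rightarrow> (nat \<Rightarrow> real^2) \<Rightarrow> real^2 \<Rightarrow> bool" where
  "dense_around lam m x y \<longleftrightarrow>
     pi / 3 * lam + 1 < points_in m (half_disc (49/50) y) x \<and>
     points_in m (ball y (103/100)) x < 2 * pi * lam \<and>
     0 < points_in m (half_disc (1/5) y) x"

definition well_spread :: "nat \<Rightarrow> real \<Rightarrow> nat \<Rightarrow> (nat \<Rightarrow> real^2) \<Rightarrow> bool" where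
  "well_spread n lam m x \<longleftrightarrow> (\<forall>y\<in>grid n. norm y ^ 2 + 1 < real n ^ 2 \<longrightarrow> dense_around lam m x y)"

lemma points_in_ball_le_degree:
  assumes "i < m" "dist (x i) y + r \<le> 1"
  shows "points_in m (ball y r) x \<le> real (geo_degree x m i) + 1"
proof -
  have "dist (x i) (x j) \<le> 1" if "x j \<in> ball y r" for j
    using that assms dist_triangle[of "x i" "x j" y] by (simp add: dist_commute)
  then have "{j. j < m \<and> x j \<in> ball y r} \<subseteq> insert i {j. j < m \<and> j \<noteq> i \<and> dist (x i) (x j) \<le> 1}"
    by auto
  then have "card {j. j < m \<and> x j \<in> ball y r} \<le> card (insert i {j. j < m \<and> j \<noteq> i \<and> dist (x i) (x j) \<le> 1})"
    by (intro card_mono) auto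
  also have "\<dots> \<le> Suc (geo_degree x m i)"
    unfolding geo_degree_def by (simp add: card_insert_if)
  finally show ?thesis by (simp add: points_in_eq_card)
qed

lemma degree_le_points_in_ball:
  assumes "dist (x i) y + 1 < r"
  shows "real (geo_degree x m i) \<le> points_in m (ball y r) x"
proof -
  have "x j \<in> ball y r" if "dist (x i) (x j) \<le> 1" for j
    using that assms dist_triangle[of y "x j" "x i"] by (simp add: dist_commute)
  then have "{j. j < m \<and> j \<noteq> i \<and> dist (x i) (x j) \<le> 1} \<subseteq> {j. j < m \<and> x j \<in> ball y r}"
    by auto
  then have "geo_degree x m i \<le> card {j. j < m \<and> x j \<in> ball y r}"
    unfolding geo_degree_def by (intro card_mono) auto
  then show ?thesis by (simp add: points_in_eq_card)
qed

lemma well_spread_degree_bounds: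
  assumes n: "n \<ge> 100" and spread: "well_spread n lam m x"
    and i: "i < m" and xi: "norm (x i) \<le> real n"
  shows "pi / 3 * lam \<le> real (geo_degree x m i) \<and> real (geo_degree x m i) \<le> 2 * pi * lam"
proof -
  define y where "y = grid_point n (x i)"
  note y = grid_point_properties[OF n xi, folded y_def]
  have "pi / 3 * lam + 1 < points_in m (half_disc (49/50) y) x"
    and "points_in m (ball y (103/100)) x < 2 * pi * lam"
    using spread y by (auto simp: well_spread_def dense_around_def)
  moreover have "points_in m (half_disc (49/50) y) x \<le> real (geo_degree x m i) + 1"
    using y(1) order_trans[OF points_in_mono[OF half_disc_subset_ball] points_in_ball_le_degree[OF i]]
    by simp
  moreover have "real (geo_degree x m i) \<le> points_in m (ball y (103/100)) x"
    using y(1) by (intro degree_le_points_in_ball) simp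
  ultimately show ?thesis by linarith
qed

lemma well_spread_vertex_near:
  assumes n: "n \<ge> 100" and spread: "well_spread n lam m x" and q: "norm q \<le> real n"
  shows "\<exists>v<m. dist (x v) q \<le> 11/50"
proof -
  define y where "y = grid_point n q"
  note y = grid_point_properties[OF n q, folded y_def]
  have "0 < points_in m (half_disc (1/5) y) x"
    using spread y by (auto simp: well_spread_def dense_around_def)
  then obtain v where "v < m" "x v \<in> half_disc (1/5) y"
    by (force simp: points_in_eq_card card_gt_0_iff)
  then have "dist (x v) y < 1/5" using half_disc_subset_ball by (force simp: dist_commute)
  then show ?thesis
    using \<open>v < m\<close> y(1) dist_triangle[of "x v" q y] by (auto simp: dist_commute)
qed

lemma geo_walk_le_tracking:
  assumes "L \<le> k" "p 0 = i" "p L = j" "\<forall>t\<le>L. p t < m"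
    and steps: "\<forall>t<L. dist (q t) (q (Suc t)) \<le> 1/2"
    and close: "\<forall>t\<le>L. dist (x (p t)) (q t) \<le> 1/4"
  shows "geo_walk_le x m k i j"
  unfolding geo_walk_le_def
proof (intro exI[of _ p] exI[of _ L] conjI allI impI)
  fix t assume "t < L"
  then have "dist (x (p t)) (q t) \<le> 1/4" "dist (q t) (q (Suc t)) \<le> 1/2"
    "dist (x (p (Suc t))) (q (Suc t)) \<le> 1/4"
    using steps close by auto
  then show "dist (x (p t)) (x (p (Suc t))) \<le> 1"
    using dist_triangle[of "x (p t)" "x (p (Suc t))" "q t"]
      dist_triangle[of "q t" "x (p (Suc t))" "q (Suc t)"] by (simp add: dist_commute)
qed (use assms in auto)

lemma well_spread_diameter:
  assumes n: "n \<ge> 100" and spread: "well_spread n lam m x"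
    and inside: "\<forall>j<m. x j \<in> ball 0 (real n)"
  shows "geo_diam_le x m (6 * n)"
  unfolding geo_diam_le_def
proof (intro allI impI)
  fix i j assume i: "i < m" and j: "j < m"
  define L where "L = 4 * n"
  have L: "L > 0" "real L = 4 * real n" using n by (auto simp: L_def)
  define q where "q t = x i + (real t / real L) *\<^sub>R (x j - x i)" for t
  have "q t \<in> ball 0 (real n)" if "t \<le> L" for t
  proof -
    have "q t = (1 - real t / real L) *\<^sub>R x i + (real t / real L) *\<^sub>R x j"
      by (simp add: q_def algebra_simps)
    also have "\<dots> \<in> ball 0 (real n)"
      using that L inside i j by (intro convexD[OF convex_ball]) (auto simp: field_simps)
    finally show ?thesis .
  qed
  then have near: "\<forall>t\<in>{..L}. \<exists>v<m. dist (x v) (q t) \<le> 11/50"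
    by (intro ballI well_spread_vertex_near[OF n spread]) (auto intro: less_imp_le)
  obtain v where v: "\<forall>t\<in>{..L}. v t < m \<and> dist (x (v t)) (q t) \<le> 11/50"
    using bchoice[OF near] by blast
  define p where "p t = (if t = 0 then i else if t = L then j else v t)" for t
  have "dist (q t) (q (Suc t)) \<le> 1/2" for t
  proof -
    have "q (Suc t) - q t = (1 / real L) *\<^sub>R (x j - x i)"
      by (simp add: q_def algebra_simps add_divide_distrib scaleR_add_left)
    then have "dist (q t) (q (Suc t)) = norm ((1 / real L) *\<^sub>R (x j - x i))"
      by (metis dist_commute dist_norm)
    then have "dist (q t) (q (Suc t)) = norm (x j - x i) / real L"
      by simp
    moreover have "norm (x j) < real n" "norm (x i) < real n"
      using inside i j by auto
    then have "norm (x j - x i) \<le> 2 * real n"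
      using norm_triangle_ineq4[of "x j" "x i"] by linarith
    ultimately show ?thesis using L by (simp add: divide_le_eq)
  qed
  moreover have "p t < m \<and> dist (x (p t)) (q t) \<le> 1/4" if "t \<le> L" for t
  proof -
    have "q 0 = x i" "q L = x j" "v t < m" "dist (x (v t)) (q t) \<le> 11/50"
      using L v that by (auto simp: q_def)
    then show ?thesis using i j by (auto simp: p_def)
  qed
  ultimately show "geo_walk_le x m (6 * n) i j"
    using n by (intro geo_walk_le_tracking[of L _ p i j m q]) (auto simp: L_def p_def)
qed

section \<open>Measurability of the event\<close>

lemma geo_degree_eq_sum:
  "real (geo_degree x m i) = (\<Sum>j<m. if j \<noteq> i \<and> dist (x i) (x j) \<le> 1 then 1 else 0)"
proof -
  have "(\<Sum>j<m. if j \<noteq> i \<and> dist (x i) (x j) \<le> 1 then 1 else 0)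
      = (\<Sum>j\<in>{j\<in>{..<m}. j \<noteq> i \<and> dist (x i) (x j) \<le> (1::real)}. 1::real)"
    by (rule sum.inter_filter[symmetric]) simp
  moreover have "{j\<in>{..<m}. j \<noteq> i \<and> dist (x i) (x j) \<le> 1} = {j. j < m \<and> j \<noteq> i \<and> dist (x i) (x j) \<le> 1}"
    by auto
  ultimately show ?thesis by (simp add: geo_degree_def)
qed

lemma geo_walk_le_iff_bounded:
  "geo_walk_le x m k i j \<longleftrightarrow>
     (\<exists>l\<in>{..k}. \<exists>p\<in>PiE {..l} (\<lambda>_. {..<m}). p 0 = i \<and> p l = j \<and>
        (\<forall>t\<in>{..<l}. dist (x (p t)) (x (p (Suc t))) \<le> 1))"
  unfolding geo_walk_le_def
proof safe
  fix p l assume "l \<le> k" "\<forall>t\<le>l. p t < m" "\<forall>t<l. dist (x (p t)) (x (p (Suc t))) \<le> 1"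
  then show "\<exists>l'\<in>{..k}. \<exists>p'\<in>PiE {..l'} (\<lambda>_. {..<m}). p' 0 = p 0 \<and> p' l' = p l \<and>
      (\<forall>t\<in>{..<l'}. dist (x (p' t)) (x (p' (Suc t))) \<le> 1)"
    by (intro bexI[of _ l] bexI[of _ "restrict p {..l}"]) auto
qed fastforce

lemma measurable_component_borel:
  assumes "sets M = sets (borel :: 'b::topological_space measure)"
  shows "(\<lambda>x. x a) \<in> measurable (PiM I (\<lambda>_. M)) (borel :: 'b measure)"
proof (cases "a \<in> I")
  case True
  then show ?thesis
    using measurable_component_singleton[OF True, of "\<lambda>_. M"] measurable_cong_sets assms by blast
next
  case False
  then have "(\<lambda>x. x a) \<in> measurable (PiM I (\<lambda>_. M)) borel \<longleftrightarrow>
      (\<lambda>x. undefined) \<in> measurable (PiM I (\<lambda>_. M)) (borel :: 'b measure)"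
    by (intro measurable_cong) (auto simp: space_PiM PiE_def extensional_def)
  then show ?thesis by simp
qed

lemma sets_degree_diam_event:
  fixes M :: "(real^2) measure"
  assumes "sets M = sets borel"
  shows "{x \<in> space (PiM {..<m} (\<lambda>_. M)). (\<forall>i<m. a \<le> real (geo_degree x m i) \<and> real (geo_degree x m i) \<le> b)
          \<and> geo_diam_le x m k} \<in> sets (PiM {..<m} (\<lambda>_. M))"
proof -
  let ?P = "PiM {..<m} (\<lambda>_. M)"
  have [measurable]: "(\<lambda>x. x c) \<in> measurable ?P borel" for c
    using measurable_component_borel[OF assms] .
  have edges: "{x \<in> space ?P. dist (x c) (x d) \<le> 1} \<in> sets ?P" for c d by measurable
  have degree: "{x \<in> space ?P. a \<le> real (geo_degree x m i) \<and> real (geo_degree x m i) \<le> b} \<in> sets ?P" for i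
    unfolding geo_degree_eq_sum by measurable
  have walk: "{x \<in> space ?P. geo_walk_le x m k i j} \<in> sets ?P" for i j
    unfolding geo_walk_le_iff_bounded
    by (intro sets.sets_Collect_finite_Ex sets.sets_Collect_conj sets.sets_Collect_const
        sets.sets_Collect_finite_All edges finite_PiE finite_atMost finite_lessThan)
  have "{x \<in> space ?P. (\<forall>i<m. a \<le> real (geo_degree x m i) \<and> real (geo_degree x m i) \<le> b)
          \<and> geo_diam_le x m k} = {x \<in> space ?P. (\<forall>i\<in>{..<m}. a \<le> real (geo_degree x m i) \<and> real (geo_degree x m i) \<le> b)
          \<and> (\<forall>i\<in>{..<m}. \<forall>j\<in>{..<m}. geo_walk_le x m k i j)}"
    by (auto simp: geo_diam_le_def)
  then show ?thesis
    by (simp only:) (intro degree walk sets.sets_Collect_conj sets.sets_Collect_finite_All finite_lessThan)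
qed


section \<open>Points uniform in a disc\<close>

lemma emeasure_disc: "R \<ge> 0 \<Longrightarrow> emeasure lborel (ball (0::real^2) R) = ennreal (R ^ 2 * pi)"
  using emeasure_eq_ennreal_measure[of lborel "ball (0::real^2) R"] emeasure_lborel_ball_finite[of 0 R]
    circle_area[of R 0]
  by (simp add: less_top)

lemma prob_space_uniform_disc:
  "R > 0 \<Longrightarrow> prob_space (uniform_measure lborel (ball (0::real^2) R))"
  by (intro prob_space_uniform_measure) (simp_all add: emeasure_disc)

lemma prob_space_point_process: "R > 0 \<Longrightarrow> prob_space (point_process m R)"
  unfolding point_process_def by (intro prob_space_PiM prob_space_uniform_disc)

lemma points_in_measurable_point_process[measurable]:
  "A \<in> sets borel \<Longrightarrow> points_in m A \<in> borel_measurable (point_process m R)"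
  unfolding point_process_def by (intro points_in_measurable) simp

lemma measure_uniform_disc:
  assumes "R > 0" "A \<in> sets borel"
  shows "measure (uniform_measure lborel (ball (0::real^2) R)) A = measure lborel (ball 0 R \<inter> A) / (R ^ 2 * pi)"
  using assms circle_area[of R 0] by (subst measure_uniform_measure) (simp_all add: emeasure_disc)

lemma outside_disc_null:
  assumes "R > 0"
  shows "{x \<in> space (point_process m R). \<exists>j<m. x j \<notin> ball 0 R} \<in> null_sets (point_process m R)"
proof -
  let ?\<mu> = "uniform_measure lborel (ball (0::real^2) R)"
  interpret product_prob_space "\<lambda>_. ?\<mu>" "{..<m}"
    using prob_space_uniform_disc[OF assms]
    by (simp add: product_prob_space_def product_prob_space_axioms_def
        product_sigma_finite_def prob_space_imp_sigma_finite)
  have "{x \<in> space (point_process m R). x j \<in> - ball 0 R} \<in> null_sets (point_process m R)" if "j < m" for j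
    using that emeasure_PiM_Collect_single[of j "- ball 0 R"]
    by (auto simp: point_process_def null_sets_def)
  then have "(\<Union>j<m. {x \<in> space (point_process m R). x j \<in> - ball 0 R}) \<in> null_sets (point_process m R)"
    by (intro null_sets_UN') auto
  moreover have "(\<Union>j<m. {x \<in> space (point_process m R). x j \<in> - ball 0 R})
      = {x \<in> space (point_process m R). \<exists>j<m. x j \<notin> ball 0 R}"
    by auto
  ultimately show ?thesis by simp
qed

lemma expected_points_in_ball_le:
  fixes m :: nat
  assumes "R > 0" "r \<ge> 0"
  shows "m * measure (uniform_measure lborel (ball (0::real^2) R)) (ball y r) \<le> m / (pi * R ^ 2) * (pi * r ^ 2)"
proof -
  have "measure (uniform_measure lborel (ball (0::real^2) R)) (ball y r)
      = measure lborel (ball 0 R \<inter> ball y r) / (R ^ 2 * pi)"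
    using assms by (simp add: measure_uniform_disc)
  also have "\<dots> \<le> measure lborel (ball y r) / (R ^ 2 * pi)"
    by (intro divide_right_mono measure_mono_fmeasurable fmeasurableI emeasure_lborel_ball_finite) auto
  finally have "m * measure (uniform_measure lborel (ball (0::real^2) R)) (ball y r) \<le> m * (r ^ 2 * pi / (R ^ 2 * pi))"
    using circle_area[OF assms(2), of y] by (intro mult_left_mono) auto
  also have "\<dots> = m / (pi * R ^ 2) * (pi * r ^ 2)"
    by (simp add: field_simps)
  finally show ?thesis .
qed

lemma expected_points_in_half_disc_ge:
  fixes m :: nat
  assumes "R > 0" "r \<ge> 0" "norm y ^ 2 + r ^ 2 \<le> R ^ 2"
  shows "m / (pi * R ^ 2) * (pi * r ^ 2 / 2) \<le> m * measure (uniform_measure lborel (ball (0::real^2) R)) (half_disc r y)"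
proof -
  have "ball 0 R \<inter> half_disc r y = half_disc r y"
    using half_disc_subset_centred_ball[of y r R] assms by auto
  then have "measure (uniform_measure lborel (ball (0::real^2) R)) (half_disc r y)
      = measure lborel (half_disc r y) / (R ^ 2 * pi)"
    using assms by (simp add: measure_uniform_disc)
  also have "\<dots> \<ge> (pi * r ^ 2 / 2) / (R ^ 2 * pi)"
    using measure_half_disc_ge[OF assms(2), of y] by (intro divide_right_mono) auto
  finally have "m * ((pi * r ^ 2 / 2) / (R ^ 2 * pi)) \<le> m * measure (uniform_measure lborel (ball (0::real^2) R)) (half_disc r y)"
    by (intro mult_left_mono) auto
  moreover have "m * ((pi * r ^ 2 / 2) / (R ^ 2 * pi)) = m / (pi * R ^ 2) * (pi * r ^ 2 / 2)"
    by (simp add: field_simps)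
  ultimately show ?thesis by simp
qed

text \<open>Chernoff bounds with \<open>s = 1/2\<close>, using \<open>1 - exp (-1/2) \<ge> 5/13\<close> and \<open>exp (1/2) - 1 \<le> 3/4\<close>.\<close>

lemma exp_half_bounds: "exp (- (1/2::real)) \<le> 8/13" "exp (1/2::real) \<le> 7/4"
proof -
  have "13/8 \<le> exp (1/2::real)"
    using exp_lower_Taylor_quadratic[of "1/2::real"] by (simp add: power2_eq_square)
  then show "exp (- (1/2::real)) \<le> 8/13" by (simp add: exp_minus field_simps)
  have "exp (1/2::real) ^ 2 = exp 1" by (simp add: exp_of_nat_mult[symmetric])
  also have "\<dots> \<le> (7/4) ^ 2" using exp_le by (simp add: power2_eq_square)
  finally show "exp (1/2::real) \<le> 7/4" by (rule power2_le_imp_le) simp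
qed

lemma prob_few_points_in_half_disc:
  assumes "R > 0" "r \<ge> 0" "norm y ^ 2 + r ^ 2 \<le> R ^ 2"
  shows "measure (point_process m R) {x \<in> space (point_process m R). points_in m (half_disc r y) x \<le> a}
    \<le> exp (a / 2 - 5/26 * pi * r ^ 2 * (m / (pi * R ^ 2)))"
proof -
  let ?\<mu> = "uniform_measure lborel (ball (0::real^2) R)"
  have "measure (point_process m R) {x \<in> space (point_process m R). points_in m (half_disc r y) x \<le> a}
      \<le> exp (1/2 * a - m * measure ?\<mu> (half_disc r y) * (1 - exp (- (1/2))))"
    unfolding point_process_def using prob_space_uniform_disc[OF assms(1)]
    by (intro prob_points_in_le) auto
  also have "\<dots> \<le> exp (a / 2 - 5/26 * pi * r ^ 2 * (m / (pi * R ^ 2)))"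
  proof -
    have "5/26 * pi * r ^ 2 * (m / (pi * R ^ 2)) = m / (pi * R ^ 2) * (pi * r ^ 2 / 2) * (5/13)"
      by simp
    also have "\<dots> \<le> m * measure ?\<mu> (half_disc r y) * (1 - exp (- (1/2)))"
      using exp_half_bounds(1)
      by (intro mult_mono expected_points_in_half_disc_ge[OF assms]) auto
    finally show ?thesis by simp
  qed
  finally show ?thesis .
qed

lemma prob_many_points_in_ball:
  assumes "R > 0" "r \<ge> 0"
  shows "measure (point_process m R) {x \<in> space (point_process m R). b \<le> points_in m (ball y r) x}
    \<le> exp (- b / 2 + 3/4 * pi * r ^ 2 * (m / (pi * R ^ 2)))"
proof -
  let ?\<mu> = "uniform_measure lborel (ball (0::real^2) R)"
  have "measure (point_process m R) {x \<in> space (point_process m R). b \<le> points_in m (ball y r) x}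
      \<le> exp (- (1/2) * b + m * measure ?\<mu> (ball y r) * (exp (1/2) - 1))"
    unfolding point_process_def using prob_space_uniform_disc[OF assms(1)]
    by (intro prob_points_in_ge) auto
  also have "\<dots> \<le> exp (- b / 2 + 3/4 * pi * r ^ 2 * (m / (pi * R ^ 2)))"
  proof -
    have "m * measure ?\<mu> (ball y r) * (exp (1/2) - 1) \<le> m / (pi * R ^ 2) * (pi * r ^ 2) * (3/4)"
      using exp_half_bounds(2)
      by (intro mult_mono expected_points_in_ball_le[OF assms]) auto
    also have "\<dots> = 3/4 * pi * r ^ 2 * (m / (pi * R ^ 2))"
      by (simp add: field_simps)
    finally show ?thesis by (intro exp_mono) linarith
  qed
  finally show ?thesis .
qed

lemma prob_not_dense_around:
  assumes R: "R > 0" and y: "norm y ^ 2 + 1 \<le> R ^ 2" and lam: "lam = m / (pi * R ^ 2)"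
  shows "measure (point_process m R) {x \<in> space (point_process m R). \<not> dense_around lam m x y}
    \<le> 4 * exp (- lam / 50)"
proof -
  let ?P = "point_process m R"
  interpret P: prob_space ?P using R by (rule prob_space_point_process)
  define E1 where "E1 = {x \<in> space ?P. points_in m (half_disc (49/50) y) x \<le> pi / 3 * lam + 1}"
  define E2 where "E2 = {x \<in> space ?P. 2 * pi * lam \<le> points_in m (ball y (103/100)) x}"
  define E3 where "E3 = {x \<in> space ?P. points_in m (half_disc (1/5) y) x \<le> 0}"
  have [measurable]: "E1 \<in> P.events" "E2 \<in> P.events" "E3 \<in> P.events"
    unfolding E1_def E2_def E3_def by measurable
  have "0 \<le> lam" using lam by simp
  then have lam_pi: "3 * lam \<le> pi * lam" "0 \<le> lam"
    using pi_gt3 by (auto intro!: mult_right_mono)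
  have "P.prob E1 \<le> exp ((pi / 3 * lam + 1) / 2 - 5/26 * pi * (49/50) ^ 2 * (m / (pi * R ^ 2)))"
    unfolding E1_def by (rule prob_few_points_in_half_disc[OF R]) (use y in \<open>auto simp: power2_eq_square\<close>)
  also have "\<dots> \<le> exp (1/2) * exp (- lam / 50)"
    unfolding exp_add[symmetric] lam[symmetric] using lam_pi
    by (intro exp_mono) (simp add: power2_eq_square field_simps)
  also have "\<dots> \<le> 2 * exp (- lam / 50)"
    using exp_half_bounds(2) by (intro mult_right_mono) auto
  finally have E1: "P.prob E1 \<le> 2 * exp (- lam / 50)" .
  have "P.prob E2 \<le> exp (- (2 * pi * lam) / 2 + 3/4 * pi * (103/100) ^ 2 * (m / (pi * R ^ 2)))"
    unfolding E2_def by (rule prob_many_points_in_ball[OF R]) simp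
  also have "\<dots> \<le> exp (- lam / 50)"
    unfolding lam[symmetric] using lam_pi by (intro exp_mono) (simp add: power2_eq_square field_simps)
  finally have E2: "P.prob E2 \<le> exp (- lam / 50)" .
  have "P.prob E3 \<le> exp (0 / 2 - 5/26 * pi * (1/5) ^ 2 * (m / (pi * R ^ 2)))"
    unfolding E3_def by (rule prob_few_points_in_half_disc[OF R]) (use y in \<open>auto simp: power2_eq_square\<close>)
  also have "\<dots> \<le> exp (- lam / 50)"
    unfolding lam[symmetric] using lam_pi by (intro exp_mono) (simp add: power2_eq_square field_simps)
  finally have E3: "P.prob E3 \<le> exp (- lam / 50)" .
  have "{x \<in> space ?P. \<not> dense_around lam m x y} = E1 \<union> E2 \<union> E3"
    by (auto simp: E1_def E2_def E3_def dense_around_def not_less)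
  moreover have "P.prob (E1 \<union> E2 \<union> E3) \<le> P.prob E1 + P.prob E2 + P.prob E3"
    using measure_Un_le[of E1 ?P E2] measure_Un_le[of "E1 \<union> E2" ?P E3] by simp
  ultimately show ?thesis using E1 E2 E3 by simp
qed

lemma sets_not_well_spread[measurable]:
  "{x \<in> space (point_process m R). \<not> well_spread n lam m x} \<in> sets (point_process m R)"
  unfolding well_spread_def dense_around_def using finite_grid[of n] by measurable

lemma prob_not_well_spread:
  assumes n: "n > 0" and lam: "lam = m / (pi * real n ^ 2)"
  shows "measure (point_process m n) {x \<in> space (point_process m n). \<not> well_spread n lam m x}
    \<le> card (grid n) * (4 * exp (- lam / 50))"
proof -
  let ?P = "point_process m (real n)"
  interpret P: prob_space ?P using n by (intro prob_space_point_process) simp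
  define G where "G = {y \<in> grid n. norm y ^ 2 + 1 < real n ^ 2}"
  define E where "E y = {x \<in> space ?P. \<not> dense_around lam m x y}" for y
  have [measurable]: "E y \<in> P.events" for y
    unfolding E_def dense_around_def by measurable
  have "{x \<in> space ?P. \<not> well_spread n lam m x} = (\<Union>y\<in>G. E y)"
    by (auto simp: well_spread_def G_def E_def)
  also have "P.prob (\<Union>y\<in>G. E y) \<le> (\<Sum>y\<in>G. P.prob (E y))"
    using finite_grid by (intro P.finite_measure_subadditive_finite) (auto simp: G_def)
  also have "\<dots> \<le> (\<Sum>y\<in>G. 4 * exp (- lam / 50))"
    unfolding E_def using n lam by (intro sum_mono prob_not_dense_around) (auto simp: G_def)
  also have "\<dots> \<le> card (grid n) * (4 * exp (- lam / 50))"
    using finite_grid by (simp add: G_def card_mono mult_right_mono)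
  finally show ?thesis .
qed

lemma card_grid_exp_le:
  assumes n: "n \<ge> 100" and large: "200 * ln (real n) < lam"
  shows "card (grid n) * (4 * exp (- lam / 50)) \<le> 4 * 2003 ^ 2 / real n"
proof -
  have "exp (- lam / 50) \<le> exp (- (4 * ln (real n)))"
    using large by simp
  also have "\<dots> = 1 / exp (4 * ln (real n))"
    by (simp only: exp_minus inverse_eq_divide)
  also have "exp (4 * ln (real n)) = real n ^ 4"
    using exp_of_nat_mult[of 4 "ln (real n)"] n by simp
  finally have "exp (- lam / 50) \<le> 1 / real n ^ 4" .
  moreover have "card (grid n) \<le> (2003 * n) ^ 2"
    using card_grid[of n] power_mono[of "2000 * n + 3" "2003 * n" 2] n by linarith
  then have "real (card (grid n)) \<le> (2003 * real n) ^ 2"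
    by (metis of_nat_le_iff of_nat_mult of_nat_numeral of_nat_power)
  ultimately have "card (grid n) * (4 * exp (- lam / 50)) \<le> (2003 * real n) ^ 2 * (4 * (1 / real n ^ 4))"
    by (intro mult_mono) auto
  also have "\<dots> = 4 * 2003 ^ 2 / real n ^ 2"
    using n by (simp add: power_mult_distrib field_simps flip: power_add)
  also have "\<dots> \<le> 4 * 2003 ^ 2 / real n"
    using n by (intro divide_left_mono) (auto simp: power2_eq_square)
  finally show ?thesis .
qed

lemma prob_degree_diam_event_ge:
  fixes n m :: nat
  assumes n: "n \<ge> 100" and lam: "lam = m / (pi * real n ^ 2)" and large: "200 * ln (real n) < lam"
  shows "1 - 4 * 2003 ^ 2 / real n \<le> measure (point_process m n)
           {x \<in> space (point_process m n).
              (\<forall>i<m. pi / 3 * lam \<le> real (geo_degree x m i) \<and> real (geo_degree x m i) \<le> 2 * pi * lam)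
              \<and> geo_diam_le x m (6 * n)}" (is "_ \<le> measure ?P ?T")
proof -
  interpret P: prob_space ?P using n by (intro prob_space_point_process) simp
  define W where "W = {x \<in> space ?P. \<not> well_spread n lam m x}"
  define Out where "Out = {x \<in> space ?P. \<exists>j<m. x j \<notin> ball 0 (real n)}"
  have "?T \<in> P.events"
    unfolding point_process_def by (rule sets_degree_diam_event) simp
  moreover have "space ?P - W - Out \<subseteq> ?T"
  proof
    fix x assume "x \<in> space ?P - W - Out"
    then have x: "x \<in> space ?P" "well_spread n lam m x" "\<forall>j<m. x j \<in> ball 0 (real n)"
      by (auto simp: W_def Out_def)
    then have "norm (x i) \<le> real n" if "i < m" for i
      using that by (auto intro: less_imp_le)
    then show "x \<in> ?T"
      using x well_spread_degree_bounds[OF n x(2)] well_spread_diameter[OF n x(2,3)] by auto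
  qed
  ultimately have "P.prob (space ?P - W - Out) \<le> P.prob ?T"
    by (rule P.finite_measure_mono[rotated])
  moreover have "P.prob (space ?P - W - Out) = 1 - P.prob W"
    using outside_disc_null[of "real n" m] n
    by (simp add: measure_Diff_null_set Out_def W_def P.prob_compl)
  moreover have "P.prob W \<le> 4 * 2003 ^ 2 / real n"
    using prob_not_well_spread[OF _ lam] card_grid_exp_le[OF n large] n unfolding W_def by force
  ultimately show ?thesis by linarith
qed

lemma LIMSEQ_one_of_lower_bound:
  fixes p :: "nat \<Rightarrow> real"
  assumes "\<And>n. n \<ge> N \<Longrightarrow> 1 - c / real n \<le> p n" and "\<And>n. n \<ge> N \<Longrightarrow> p n \<le> 1"
  shows "p \<longlonglongrightarrow> 1"
proof (rule tendsto_sandwich[of "\<lambda>n. 1 - c / real n" p sequentially "\<lambda>_. 1"])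
  show "(\<lambda>n. 1 - c / real n) \<longlonglongrightarrow> 1"
    using tendsto_diff[OF tendsto_const lim_const_over_n[of c]] by simp
qed (use assms in \<open>auto intro: eventually_sequentiallyI\<close>)

theorem lemma2p1:
  "\<exists>C1::real. C1 > 0 \<and>
     (\<forall>f::nat \<Rightarrow> nat. mono f \<longrightarrow>
        (\<forall>n\<ge>1. real (f n) / (pi * real n ^ 2) > C1 * ln (real n)) \<longrightarrow>
        (\<lambda>n. measure (point_process (f n) (real n))
               {x \<in> space (point_process (f n) (real n)).
                  (\<forall>i<f n. pi / 3 * (real (f n) / (pi * real n ^ 2)) \<le> real (geo_degree x (f n) i)
                         \<and> real (geo_degree x (f n) i) \<le> 2 * pi * (real (f n) / (pi * real n ^ 2)))
                  \<and> geo_diam_le x (f n) (6 * n)})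
        \<longlonglongrightarrow> 1)"
  apply (intro exI[of _ "200::real"] conjI allI impI)
   apply simp
  apply (rule LIMSEQ_one_of_lower_bound[where N = 100 and c = "4 * 2003 ^ 2"])
  subgoal for f n by (rule prob_degree_diam_event_ge) auto
  subgoal for f n by (rule prob_space.prob_le_1, rule prob_space_point_process) simp
  done

end
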